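(* Let $L$ be an ultraparacompact locale with $\bot\neq\top$, $B$ its Boolean algebra of complemented opens, $\mathcal{J}$ the set of partitions of $L$, and $F$ a $B_{\mathcal{J}}$-set. For each $x\in|F|$ the function $\hat x:=\lambda y.\bigvee\{b\in B: x\equiv_b y\}$ is an open of the étale space $E(F)$, and the assignment $x\mapsto\hat x$ is injective. Moreover every $w\in\mathcal{O}(E(F))$ satisfies $w=\bigvee_{x\in|F|}\hat x\wedge\mathrm{const}_{w(x)}$.
   Context: Partitions of $L$: pairwise disjoint sets of opens, not containing $\bot$, with join $\top$ (their members are complemented). $L$ ultraparacompact: every open is a join of complemented opens, and every cover is refined by a partition. A $B_{\mathcal{J}}$-set $F$ is a set $|F|$ with binary operations $b(-,-)$ ($b\in B$) satisfying $b(x,x)=x$, $b(b(x,y),z)=b(x,z)$, $b(x,b(y,z))=b(x,z)$, $\top(x,y)=x$, $(\neg b)(x,y)=b(y,x)$, $(b\wedge c)(x,y)=b(c(x,y),y)$, and $P$-ary operations $P(-)$ for $P\in\mathcal{J}$ satisfying $P(\lambda b.z)=z$, $P(\lambda b.b(x_b,y_b))=P(\lambda b.x_b)$, $b(P(x),x_b)=x_b$ ($b\in P$). For $b\in B$, $x\equiv_by$ iff $b(x,y)=y$. $\mathcal{O}(L)$ is a $B_{\mathcal{J}}$-set via $b(u,v)=(b\wedge u)\vee(\neg b\wedge v)$, $P(\lambda b.u_b)=\bigvee_{b\in P}(b\wedge u_b)$. The étale space $E(F)$ is the locale whose frame $\mathcal{O}(E(F))$ is the set of $B_{\mathcal{J}}$-set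 homomorphisms $F\to\mathcal{O}(L)$, ordered pointwise (meets and joins computed pointwise); $\mathrm{const}_u$ denotes the constant function with value $u$. *)

theory Defs
  imports Main
begin

unbundle lattice_syntax

text \<open>The frame O(L) of opens of a locale L is modelled as a type 'a of class
complete_lattice satisfying the frame (infinite) distributive law.\<close>

definition frame_law :: "'a::complete_lattice itself \<Rightarrow> bool" where
  "frame_law _ \<longleftrightarrow> (\<forall>(a::'a) S. a \<sqinter> Sup S = (SUP s\<in>S. a \<sqinter> s))"

definition complemented :: "'a::complete_lattice \<Rightarrow> bool" where
  "complemented b \<longleftrightarrow> (\<exists>c. b \<sqinter> c = bot \<and> b \<squnion> c = top)"

definition cneg :: "'a::complete_lattice \<Rightarrow> 'a" where
  "cneg b = (THE c. b \<sqinter> c = bot \<and> b \<squnion> c = top)"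

definition partition_of :: "'a::complete_lattice set \<Rightarrow> bool" where
  "partition_of P \<longleftrightarrow> (\<forall>b\<in>P. \<forall>c\<in>P. b \<noteq> c \<longrightarrow> b \<sqinter> c = bot) \<and> bot \<notin> P \<and> Sup P = top"

definition ultraparacompact :: "'a::complete_lattice itself \<Rightarrow> bool" where
  "ultraparacompact _ \<longleftrightarrow>
     (\<forall>u::'a. \<exists>S. (\<forall>s\<in>S. complemented s) \<and> u = Sup S) \<and>
     (\<forall>C::'a set. Sup C = top \<longrightarrow> (\<exists>P. partition_of P \<and> (\<forall>p\<in>P. \<exists>c\<in>C. p \<le> c)))"

text \<open>A B_J-set with carrier X, binary operations bop b (b complemented) and
P-ary operations pop P (P a partition), families given as functions on P.\<close>
definition bj_set :: "'x set \<Rightarrow> ('a::complete_lattice \<Rightarrow> 'x \<Rightarrow> 'x \<Rightarrow> 'x) \<Rightarrow> ('a set \<Rightarrow> ('a \<Rightarrow> 'x) \<Rightarrow> 'x) \<Rightarrow> bool" where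
  "bj_set X bop pop \<longleftrightarrow>
     (\<forall>b x y. complemented b \<longrightarrow> x \<in> X \<longrightarrow> y \<in> X \<longrightarrow> bop b x y \<in> X) \<and>
     (\<forall>P xs. partition_of P \<longrightarrow> (\<forall>b\<in>P. xs b \<in> X) \<longrightarrow> pop P xs \<in> X) \<and>
     (\<forall>P xs ys. partition_of P \<longrightarrow> (\<forall>b\<in>P. xs b = ys b) \<longrightarrow> pop P xs = pop P ys) \<and>
     (\<forall>b x. complemented b \<longrightarrow> x \<in> X \<longrightarrow> bop b x x = x) \<and>
     (\<forall>b x y z. complemented b \<longrightarrow> x \<in> X \<longrightarrow> y \<in> X \<longrightarrow> z \<in> X \<longrightarrow> bop b (bop b x y) z = bop b x z) \<and>
     (\<forall>b x y z. complemented b \<longrightarrow> x \<in> X \<longrightarrow> y \<in> X \<longrightarrow> z \<in> X \<longrightarrow> bop b x (bop b y z) = bop b x z) \<and>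
     (\<forall>x y. x \<in> X \<longrightarrow> y \<in> X \<longrightarrow> bop top x y = x) \<and>
     (\<forall>b x y. complemented b \<longrightarrow> x \<in> X \<longrightarrow> y \<in> X \<longrightarrow> bop (cneg b) x y = bop b y x) \<and>
     (\<forall>b c x y. complemented b \<longrightarrow> complemented c \<longrightarrow> x \<in> X \<longrightarrow> y \<in> X \<longrightarrow>
         bop (b \<sqinter> c) x y = bop b (bop c x y) y) \<and>
     (\<forall>P z. partition_of P \<longrightarrow> z \<in> X \<longrightarrow> pop P (\<lambda>b. z) = z) \<and>
     (\<forall>P xs ys. partition_of P \<longrightarrow> (\<forall>b\<in>P. xs b \<in> X \<and> ys b \<in> X) \<longrightarrow>
         pop P (\<lambda>b. bop b (xs b) (ys b)) = pop P xs) \<and>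
     (\<forall>P xs b. partition_of P \<longrightarrow> (\<forall>c\<in>P. xs c \<in> X) \<longrightarrow> b \<in> P \<longrightarrow>
         bop b (pop P xs) (xs b) = xs b)"

definition beq :: "('a \<Rightarrow> 'x \<Rightarrow> 'x \<Rightarrow> 'x) \<Rightarrow> 'a \<Rightarrow> 'x \<Rightarrow> 'x \<Rightarrow> bool" where
  "beq bop b x y \<longleftrightarrow> bop b x y = y"

definition bj_hom :: "'x set \<Rightarrow> ('a::complete_lattice \<Rightarrow> 'x \<Rightarrow> 'x \<Rightarrow> 'x) \<Rightarrow> ('a set \<Rightarrow> ('a \<Rightarrow> 'x) \<Rightarrow> 'x) \<Rightarrow> ('x \<Rightarrow> 'a) \<Rightarrow> bool" where
  "bj_hom X bop pop h \<longleftrightarrow>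
     (\<forall>b x y. complemented b \<longrightarrow> x \<in> X \<longrightarrow> y \<in> X \<longrightarrow>
        h (bop b x y) = (b \<sqinter> h x) \<squnion> (cneg b \<sqinter> h y)) \<and>
     (\<forall>P xs. partition_of P \<longrightarrow> (\<forall>b\<in>P. xs b \<in> X) \<longrightarrow>
        h (pop P xs) = (SUP b\<in>P. b \<sqinter> h (xs b)))"

text \<open>The frame O(E(F)): homomorphisms, represented extensionally (value bot off the carrier);
order, meets and joins are pointwise.\<close>
definition etale_opens :: "'x set \<Rightarrow> ('a::complete_lattice \<Rightarrow> 'x \<Rightarrow> 'x \<Rightarrow> 'x) \<Rightarrow> ('a set \<Rightarrow> ('a \<Rightarrow> 'x) \<Rightarrow> 'x) \<Rightarrow> ('x \<Rightarrow> 'a) set" where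
  "etale_opens X bop pop = {h. bj_hom X bop pop h \<and> (\<forall>y. y \<notin> X \<longrightarrow> h y = bot)}"

definition hat :: "'x set \<Rightarrow> ('a::complete_lattice \<Rightarrow> 'x \<Rightarrow> 'x \<Rightarrow> 'x) \<Rightarrow> 'x \<Rightarrow> 'x \<Rightarrow> 'a" where
  "hat X bop x = (\<lambda>y. if y \<in> X then Sup {b. complemented b \<and> beq bop b x y} else bot)"

end

theory Submission
  imports Defs
begin

text \<open>The value of \<open>hat x\<close> at \<open>y\<close> is the truth value of \<open>x = y\<close>, the join of the
complemented opens on which \<open>x\<close> and \<open>y\<close> agree. Everything rests on locality: if
\<open>u \<equiv>\<^sub>b y\<close>, then \<open>hat x u\<close> and \<open>hat x y\<close> agree below \<open>b\<close>. As \<open>b(y,z)\<close> agrees with \<open>y\<close>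
below \<open>b\<close> and with \<open>z\<close> below \<open>\<not>b\<close>, and \<open>P(y)\<close> agrees with \<open>y\<^sub>p\<close> below \<open>p \<in> P\<close>, this makes
\<open>hat x\<close> a homomorphism. If \<open>hat x y = \<top>\<close>, ultraparacompactness refines this cover by a
partition on whose blocks \<open>x\<close> and \<open>y\<close> agree, and gluing over it gives \<open>x = y\<close>. Finally, a
homomorphism \<open>w\<close> satisfies \<open>b \<sqinter> w x \<le> w (b(x,y)) = w y\<close> whenever \<open>x \<equiv>\<^sub>b y\<close>, so
\<open>hat x y \<sqinter> w x \<le> w y\<close>, while the summand at \<open>x = y\<close> is \<open>w y\<close> itself.\<close>

unbundle lattice_syntax

lemma complemented_top: "complemented (top::'a::complete_lattice)"
  unfolding complemented_def by (intro exI[of _ bot]) simp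

context
  assumes frame: "frame_law TYPE('a::complete_lattice)"
begin

lemma frame_inf_Sup: "(a::'a) \<sqinter> Sup S = (SUP s\<in>S. a \<sqinter> s)"
  using frame unfolding frame_law_def by blast

lemma frame_inf_sup: "(a::'a) \<sqinter> (b \<squnion> c) = (a \<sqinter> b) \<squnion> (a \<sqinter> c)"
  using frame_inf_Sup[of a "{b, c}"] by simp

lemma complement_unique:
  assumes "b \<sqinter> c = bot" "b \<squnion> c = top" "b \<sqinter> c' = bot" "b \<squnion> c' = (top::'a)"
  shows "c = c'"
proof -
  have "c = c \<sqinter> (b \<squnion> c')" using assms(4) by simp
  also have "\<dots> = c \<sqinter> c'" using assms(1) by (simp add: frame_inf_sup inf_commute)
  finally have "c \<le> c'" by (rule inf.orderI)
  have "c' = c' \<sqinter> (b \<squnion> c)" using assms(2) by simp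
  also have "\<dots> = c' \<sqinter> c" using assms(3) by (simp add: frame_inf_sup inf_commute)
  finally have "c' \<le> c" by (rule inf.orderI)
  show ?thesis using \<open>c \<le> c'\<close> \<open>c' \<le> c\<close> by (rule antisym)
qed

lemma cneg_complement:
  assumes "complemented (b::'a)"
  shows "b \<sqinter> cneg b = bot" "b \<squnion> cneg b = top"
proof -
  obtain c where "b \<sqinter> c = bot \<and> b \<squnion> c = top"
    using assms unfolding complemented_def by blast
  then have "\<exists>!c. b \<sqinter> c = bot \<and> b \<squnion> c = top"
    using complement_unique by blast
  then have "b \<sqinter> cneg b = bot \<and> b \<squnion> cneg b = top"
    unfolding cneg_def by (rule theI')
  then show "b \<sqinter> cneg b = bot" "b \<squnion> cneg b = top" by simp_all
qed

lemma complemented_cneg: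
  assumes "complemented (b::'a)"
  shows "complemented (cneg b)"
proof -
  have "cneg b \<sqinter> b = bot" "cneg b \<squnion> b = top"
    using cneg_complement[OF assms] by (simp_all add: inf_commute sup_commute)
  then show ?thesis unfolding complemented_def by blast
qed

lemma inf_split_cneg: "complemented (b::'a) \<Longrightarrow> a = (a \<sqinter> b) \<squnion> (a \<sqinter> cneg b)"
  by (metis cneg_complement(2) frame_inf_sup inf_top_right)

lemma complemented_inf:
  assumes b: "complemented (b::'a)" and c: "complemented c"
  shows "complemented (b \<sqinter> c)"
  unfolding complemented_def
proof (intro exI conjI)
  have "b \<sqinter> c \<sqinter> cneg b \<le> b \<sqinter> cneg b" "b \<sqinter> c \<sqinter> cneg c \<le> c \<sqinter> cneg c"
    by (auto intro: le_infI1 le_infI2)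
  then have "b \<sqinter> c \<sqinter> cneg b = bot" "b \<sqinter> c \<sqinter> cneg c = bot"
    using cneg_complement(1)[OF b] cneg_complement(1)[OF c] by (simp_all add: bot_unique)
  then show "(b \<sqinter> c) \<sqinter> (cneg b \<squnion> cneg c) = bot"
    by (simp add: frame_inf_sup)
  have "b = (b \<sqinter> c) \<squnion> (b \<sqinter> cneg c)" using c by (rule inf_split_cneg)
  also have "\<dots> \<le> (b \<sqinter> c) \<squnion> (cneg b \<squnion> cneg c)" by (intro sup_mono) (simp_all add: le_supI2)
  finally have "b \<squnion> cneg b \<le> (b \<sqinter> c) \<squnion> (cneg b \<squnion> cneg c)"
    by (simp add: le_supI2)
  then show "(b \<sqinter> c) \<squnion> (cneg b \<squnion> cneg c) = top"
    using cneg_complement(2)[OF b] by (simp add: top_unique)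
qed

lemma partition_complemented:
  assumes P: "partition_of (P::'a set)" and p: "p \<in> P"
  shows "complemented p"
  unfolding complemented_def
proof (intro exI conjI)
  have "p \<sqinter> Sup (P - {p}) = (SUP q\<in>P - {p}. p \<sqinter> q)" by (rule frame_inf_Sup)
  also have "\<dots> = bot" using P p unfolding partition_of_def by (auto simp: SUP_bot_conv)
  finally show "p \<sqinter> Sup (P - {p}) = bot" .
  have "p \<squnion> Sup (P - {p}) = Sup (insert p (P - {p}))" by (rule Sup_insert[symmetric])
  also have "insert p (P - {p}) = P" using p by blast
  finally show "p \<squnion> Sup (P - {p}) = top" using P unfolding partition_of_def by simp
qed

lemma partition_split:
  assumes "partition_of (P::'a set)"
  shows "a = (SUP p\<in>P. a \<sqinter> p)"
proof -
  have "a = a \<sqinter> Sup P" using assms unfolding partition_of_def by simp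
  also have "\<dots> = (SUP p\<in>P. a \<sqinter> p)" by (rule frame_inf_Sup)
  finally show ?thesis .
qed

end

lemma bj_hom_inf_le:
  assumes "bj_hom X bop pop w" "complemented c" "x \<in> X" "y \<in> X" "beq bop c x y"
  shows "c \<sqinter> w x \<le> w y"
proof -
  have "w y = w (bop c x y)" using \<open>beq bop c x y\<close> unfolding beq_def by simp
  also have "\<dots> = (c \<sqinter> w x) \<squnion> (cneg c \<sqinter> w y)"
    using assms(1-4) unfolding bj_hom_def by blast
  finally show ?thesis by (metis sup_ge1)
qed

locale bj_set_over_frame =
  fixes X :: "'x set"
    and bop :: "'a::complete_lattice \<Rightarrow> 'x \<Rightarrow> 'x \<Rightarrow> 'x"
    and pop :: "'a set \<Rightarrow> ('a \<Rightarrow> 'x) \<Rightarrow> 'x"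
  assumes frame: "frame_law TYPE('a)"
    and bj_set: "bj_set X bop pop"
begin

lemma bop_closed [rule_format (no_asm)]:
  "\<forall>b x y. complemented b \<longrightarrow> x \<in> X \<longrightarrow> y \<in> X \<longrightarrow> bop b x y \<in> X"
  using bj_set unfolding bj_set_def by (elim conjE) assumption

lemma pop_closed [rule_format (no_asm)]:
  "\<forall>P xs. partition_of P \<longrightarrow> (\<forall>b\<in>P. xs b \<in> X) \<longrightarrow> pop P xs \<in> X"
  using bj_set unfolding bj_set_def by (elim conjE) assumption

lemma pop_cong [rule_format (no_asm)]:
  "\<forall>P xs ys. partition_of P \<longrightarrow> (\<forall>b\<in>P. xs b = ys b) \<longrightarrow> pop P xs = pop P ys"
  using bj_set unfolding bj_set_def by (elim conjE) assumption

lemma bop_idem [rule_format (no_asm)]: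
  "\<forall>b x. complemented b \<longrightarrow> x \<in> X \<longrightarrow> bop b x x = x"
  using bj_set unfolding bj_set_def by (elim conjE) assumption

lemma bop_bop_left [rule_format (no_asm)]:
  "\<forall>b x y z. complemented b \<longrightarrow> x \<in> X \<longrightarrow> y \<in> X \<longrightarrow> z \<in> X \<longrightarrow>
    bop b (bop b x y) z = bop b x z"
  using bj_set unfolding bj_set_def by (elim conjE) assumption

lemma bop_bop_right [rule_format (no_asm)]:
  "\<forall>b x y z. complemented b \<longrightarrow> x \<in> X \<longrightarrow> y \<in> X \<longrightarrow> z \<in> X \<longrightarrow>
    bop b x (bop b y z) = bop b x z"
  using bj_set unfolding bj_set_def by (elim conjE) assumption

lemma bop_cneg [rule_format (no_asm)]:
  "\<forall>b x y. complemented b \<longrightarrow> x \<in> X \<longrightarrow> y \<in> X \<longrightarrow> bop (cneg b) x y = bop b y x"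
  using bj_set unfolding bj_set_def by (elim conjE) assumption

lemma bop_inf [rule_format (no_asm)]:
  "\<forall>b c x y. complemented b \<longrightarrow> complemented c \<longrightarrow> x \<in> X \<longrightarrow> y \<in> X \<longrightarrow>
    bop (b \<sqinter> c) x y = bop b (bop c x y) y"
  using bj_set unfolding bj_set_def by (elim conjE) assumption

lemma pop_const [rule_format (no_asm)]:
  "\<forall>P z. partition_of P \<longrightarrow> z \<in> X \<longrightarrow> pop P (\<lambda>b. z) = z"
  using bj_set unfolding bj_set_def by (elim conjE) assumption

lemma pop_bop [rule_format (no_asm)]:
  "\<forall>P xs ys. partition_of P \<longrightarrow> (\<forall>b\<in>P. xs b \<in> X \<and> ys b \<in> X) \<longrightarrow>
    pop P (\<lambda>b. bop b (xs b) (ys b)) = pop P xs"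
  using bj_set unfolding bj_set_def by (elim conjE) assumption

lemma bop_pop [rule_format (no_asm)]:
  "\<forall>P xs b. partition_of P \<longrightarrow> (\<forall>c\<in>P. xs c \<in> X) \<longrightarrow> b \<in> P \<longrightarrow>
    bop b (pop P xs) (xs b) = xs b"
  using bj_set unfolding bj_set_def by (elim conjE) assumption

lemma beq_refl: "complemented b \<Longrightarrow> x \<in> X \<Longrightarrow> beq bop b x x"
  unfolding beq_def by (rule bop_idem)

lemma beq_sym: "complemented b \<Longrightarrow> x \<in> X \<Longrightarrow> y \<in> X \<Longrightarrow> beq bop b x y \<Longrightarrow> beq bop b y x"
  unfolding beq_def by (metis bop_bop_left bop_idem)

lemma beq_trans:
  "complemented b \<Longrightarrow> x \<in> X \<Longrightarrow> y \<in> X \<Longrightarrow> z \<in> X \<Longrightarrow>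
    beq bop b x y \<Longrightarrow> beq bop b y z \<Longrightarrow> beq bop b x z"
  unfolding beq_def by (metis bop_bop_left)

lemma beq_antimono:
  assumes "complemented c" "complemented d" "c \<le> d" "x \<in> X" "y \<in> X" "beq bop d x y"
  shows "beq bop c x y"
proof -
  have "bop c x y = bop (c \<sqinter> d) x y" using \<open>c \<le> d\<close> by (simp add: inf_absorb1)
  also have "\<dots> = bop c (bop d x y) y" using assms by (simp add: bop_inf)
  also have "\<dots> = y" using assms by (simp add: beq_def bop_idem)
  finally show ?thesis unfolding beq_def .
qed

lemma beq_bop_left: "complemented b \<Longrightarrow> y \<in> X \<Longrightarrow> z \<in> X \<Longrightarrow> beq bop b (bop b y z) y"
  unfolding beq_def by (simp add: bop_bop_left bop_idem)

lemma beq_bop_right: "complemented b \<Longrightarrow> y \<in> X \<Longrightarrow> z \<in> X \<Longrightarrow> beq bop (cneg b) (bop b y z) z"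
  unfolding beq_def by (simp add: bop_cneg bop_bop_right bop_idem bop_closed)

lemma beq_pop: "partition_of P \<Longrightarrow> (\<forall>c\<in>P. ys c \<in> X) \<Longrightarrow> p \<in> P \<Longrightarrow> beq bop p (pop P ys) (ys p)"
  unfolding beq_def by (rule bop_pop)

lemma hat_apply: "y \<in> X \<Longrightarrow> hat X bop x y = Sup {b. complemented b \<and> beq bop b x y}"
  unfolding hat_def by simp

lemma hat_upper: "complemented b \<Longrightarrow> y \<in> X \<Longrightarrow> beq bop b x y \<Longrightarrow> b \<le> hat X bop x y"
  by (simp add: hat_apply Sup_upper)

lemma hat_self: "x \<in> X \<Longrightarrow> hat X bop x x = top"
  using hat_upper[OF complemented_top _ beq_refl[OF complemented_top]] by (simp add: top_unique)

lemma inf_hat_le: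
  assumes b: "complemented b" and X: "x \<in> X" "u \<in> X" "y \<in> X" and uy: "beq bop b u y"
  shows "b \<sqinter> hat X bop x u \<le> hat X bop x y"
proof -
  have "b \<sqinter> c \<le> hat X bop x y" if c: "complemented c" "beq bop c x u" for c
  proof (rule hat_upper)
    show bc: "complemented (b \<sqinter> c)" using frame b c(1) by (rule complemented_inf)
    show "beq bop (b \<sqinter> c) x y"
      using beq_trans[OF bc X beq_antimono[OF bc c(1) _ X(1,2) c(2)] beq_antimono[OF bc b _ X(2,3) uy]]
      by simp
  qed (fact X)
  then show ?thesis
    unfolding hat_apply[OF X(2)] frame_inf_Sup[OF frame] by (auto intro: SUP_least)
qed

lemma inf_hat_eq:
  assumes "complemented b" "x \<in> X" "u \<in> X" "y \<in> X" "beq bop b u y"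
  shows "b \<sqinter> hat X bop x u = b \<sqinter> hat X bop x y"
  using inf_hat_le[of b x u y] inf_hat_le[of b x y u] beq_sym[of b u y] assms
  by (auto intro: antisym)

lemma hat_bop:
  assumes x: "x \<in> X" and b: "complemented b" and y: "y \<in> X" and z: "z \<in> X"
  shows "hat X bop x (bop b y z) = (b \<sqinter> hat X bop x y) \<squnion> (cneg b \<sqinter> hat X bop x z)"
proof -
  have u: "bop b y z \<in> X" using b y z by (rule bop_closed)
  have "hat X bop x (bop b y z) =
      (hat X bop x (bop b y z) \<sqinter> b) \<squnion> (hat X bop x (bop b y z) \<sqinter> cneg b)"
    using frame b by (rule inf_split_cneg)
  also have "\<dots> = (b \<sqinter> hat X bop x y) \<squnion> (cneg b \<sqinter> hat X bop x z)"
    using inf_hat_eq[OF b x u y beq_bop_left[OF b y z]]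
      inf_hat_eq[OF complemented_cneg[OF frame b] x u z beq_bop_right[OF b y z]]
    by (simp add: inf_commute)
  finally show ?thesis .
qed

lemma hat_pop:
  assumes x: "x \<in> X" and P: "partition_of P" and ys: "\<forall>b\<in>P. ys b \<in> X"
  shows "hat X bop x (pop P ys) = (SUP b\<in>P. b \<sqinter> hat X bop x (ys b))"
proof -
  have v: "pop P ys \<in> X" using P ys by (rule pop_closed)
  have "hat X bop x (pop P ys) = (SUP p\<in>P. hat X bop x (pop P ys) \<sqinter> p)"
    using frame P by (rule partition_split)
  also have "\<dots> = (SUP p\<in>P. p \<sqinter> hat X bop x (ys p))"
  proof (rule SUP_cong[OF refl])
    fix p assume p: "p \<in> P"
    show "hat X bop x (pop P ys) \<sqinter> p = p \<sqinter> hat X bop x (ys p)"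
      using inf_hat_eq[OF partition_complemented[OF frame P p] x v _ beq_pop[OF P ys p]] ys p
      by (simp add: inf_commute)
  qed
  finally show ?thesis .
qed

lemma hat_in_etale_opens: "x \<in> X \<Longrightarrow> hat X bop x \<in> etale_opens X bop pop"
  unfolding etale_opens_def bj_hom_def using hat_bop hat_pop by (simp add: hat_def)

lemma eq_if_hat_eq_top:
  assumes up: "ultraparacompact TYPE('a)" and x: "x \<in> X" and y: "y \<in> X"
    and top: "hat X bop x y = top"
  shows "x = y"
proof -
  have "Sup {b. complemented b \<and> beq bop b x y} = top" using top by (simp add: hat_apply y)
  then obtain P where P: "partition_of P"
    and refines: "\<forall>p\<in>P. \<exists>c\<in>{b. complemented b \<and> beq bop b x y}. p \<le> c"
    using up unfolding ultraparacompact_def by blast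
  have agree: "bop p x y = y" if p: "p \<in> P" for p
  proof -
    obtain c where c: "complemented c" "beq bop c x y" "p \<le> c" using refines p by blast
    show ?thesis
      using beq_antimono[OF partition_complemented[OF frame P p] c(1) c(3) x y c(2)]
      unfolding beq_def .
  qed
  have "y = pop P (\<lambda>p. y)" using P y by (simp add: pop_const)
  also have "\<dots> = pop P (\<lambda>p. bop p x y)" using P agree by (simp add: pop_cong)
  also have "\<dots> = pop P (\<lambda>p. x)" using pop_bop[OF P, of "\<lambda>p. x" "\<lambda>p. y"] x y by simp
  also have "\<dots> = x" using P x by (simp add: pop_const)
  finally show ?thesis by simp
qed

lemma inj_on_hat:
  assumes "ultraparacompact TYPE('a)"
  shows "inj_on (hat X bop) X"
proof (rule inj_onI)
  fix x y assume x: "x \<in> X" and y: "y \<in> X" and eq: "hat X bop x = hat X bop y"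
  have "hat X bop x y = top" using eq hat_self[OF y] by simp
  then show "x = y" by (rule eq_if_hat_eq_top[OF assms x y])
qed

lemma hat_inf_le:
  assumes w: "w \<in> etale_opens X bop pop" and x: "x \<in> X" and y: "y \<in> X"
  shows "hat X bop x y \<sqinter> w x \<le> w y"
proof -
  have "c \<sqinter> w x \<le> w y" if "complemented c" "beq bop c x y" for c
    using bj_hom_inf_le[of X bop pop w] w that x y unfolding etale_opens_def by blast
  then show ?thesis
    unfolding hat_apply[OF y] inf_commute[of _ "w x"] frame_inf_Sup[OF frame]
    by (auto simp: inf_commute intro: SUP_least)
qed

lemma etale_open_eq_SUP_hat:
  assumes w: "w \<in> etale_opens X bop pop"
  shows "w = (SUP x\<in>X. hat X bop x \<sqinter> (\<lambda>_. w x))"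
proof
  fix y
  have at_y: "(SUP x\<in>X. hat X bop x \<sqinter> (\<lambda>_. w x)) y = (SUP x\<in>X. hat X bop x y \<sqinter> w x)"
    by (simp add: image_image)
  show "w y = (SUP x\<in>X. hat X bop x \<sqinter> (\<lambda>_. w x)) y"
  proof (cases "y \<in> X")
    case False
    then show ?thesis using w unfolding at_y by (simp add: etale_opens_def hat_def)
  next
    case True
    have "w y \<le> (SUP x\<in>X. hat X bop x y \<sqinter> w x)"
      using SUP_upper[OF True, of "\<lambda>x. hat X bop x y \<sqinter> w x"] hat_self[OF True] by simp
    moreover have "(SUP x\<in>X. hat X bop x y \<sqinter> w x) \<le> w y"
      using hat_inf_le[OF w _ True] by (rule SUP_least)
    ultimately show ?thesis unfolding at_y by (rule antisym)
  qed
qed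

end

theorem lemma2p18:
  fixes X :: "'x set"
    and bop :: "'a::complete_lattice \<Rightarrow> 'x \<Rightarrow> 'x \<Rightarrow> 'x"
    and pop :: "'a set \<Rightarrow> ('a \<Rightarrow> 'x) \<Rightarrow> 'x"
  assumes "frame_law TYPE('a)"
    and "ultraparacompact TYPE('a)"
    and "(bot::'a) \<noteq> top"
    and "bj_set X bop pop"
  shows "(\<forall>x\<in>X. hat X bop x \<in> etale_opens X bop pop)
       \<and> inj_on (hat X bop) X
       \<and> (\<forall>w\<in>etale_opens X bop pop. w = (SUP x\<in>X. hat X bop x \<sqinter> (\<lambda>_. w x)))"
proof -
  interpret bj_set_over_frame X bop pop using assms(1,4) by unfold_locales
  show ?thesis
    using hat_in_etale_opens inj_on_hat[OF assms(2)] etale_open_eq_SUP_hat by blast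
qed

end
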